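(* (a) Every NSS Hausdorff topological group is STAP. (c) If $(D_i)_{i\in\mathbb N}$ are nontrivial finite discrete abelian groups and $H=\{g\in\prod_i D_i:\{i:g(i)\ne e_{D_i}\}\text{ finite}\}$ carries the topology induced from the product topology, then $H$ is a countable metrizable precompact abelian group which is HTAP but not NSS.
   Context: A topological group $G$ (neutral element $e$) is NSS if some neighborhood of $e$ contains no nontrivial subgroup of $G$. $\prod_{k=1}^n a_k=a_1\cdots a_n$. A sequence $(g_n)$ in $G$ is hyper-multipliable if for every integer sequence $(m_n)$ the sequence $\left(\prod_{k=1}^n g_k^{m_k}\right)_n$ converges in $G$; hyper-converging if $g_n^{m_n}\to e$ for every integer sequence $(m_n)$. $G$ is HTAP if no sequence of pairwise distinct elements of $G$ is hyper-multipliable; STAP if no sequence of pairwise distinct elements of $G$ is hyper-converging. *)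

theory Defs
  imports "HOL-Analysis.Analysis" "HOL-Algebra.Product_Groups"
begin

definition topological_group :: "('a, 'b) monoid_scheme \<Rightarrow> 'a topology \<Rightarrow> bool" where
  "topological_group G T \<longleftrightarrow> group G \<and> topspace T = carrier G \<and>
     continuous_map (prod_topology T T) T (\<lambda>(x, y). x \<otimes>\<^bsub>G\<^esub> y) \<and>
     continuous_map T T (\<lambda>x. inv\<^bsub>G\<^esub> x)"

definition NSS :: "('a, 'b) monoid_scheme \<Rightarrow> 'a topology \<Rightarrow> bool" where
  "NSS G T \<longleftrightarrow> (\<exists>U. openin T U \<and> \<one>\<^bsub>G\<^esub> \<in> U \<and>
     (\<forall>K. subgroup K G \<and> K \<subseteq> U \<longrightarrow> K = {\<one>\<^bsub>G\<^esub>}))"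

primrec ordered_prod :: "('a, 'b) monoid_scheme \<Rightarrow> (nat \<Rightarrow> 'a) \<Rightarrow> nat \<Rightarrow> 'a" where
  "ordered_prod G f 0 = \<one>\<^bsub>G\<^esub>"
| "ordered_prod G f (Suc n) = ordered_prod G f n \<otimes>\<^bsub>G\<^esub> f n"

definition hyper_multipliable :: "('a, 'b) monoid_scheme \<Rightarrow> 'a topology \<Rightarrow> (nat \<Rightarrow> 'a) \<Rightarrow> bool" where
  "hyper_multipliable G T g \<longleftrightarrow>
     (\<forall>m :: nat \<Rightarrow> int. \<exists>l. limitin T (ordered_prod G (\<lambda>k. g k [^]\<^bsub>G\<^esub> m k)) l sequentially)"

definition hyper_converging :: "('a, 'b) monoid_scheme \<Rightarrow> 'a topology \<Rightarrow> (nat \<Rightarrow> 'a) \<Rightarrow> bool" where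
  "hyper_converging G T g \<longleftrightarrow>
     (\<forall>m :: nat \<Rightarrow> int. limitin T (\<lambda>n. g n [^]\<^bsub>G\<^esub> m n) \<one>\<^bsub>G\<^esub> sequentially)"

definition HTAP :: "('a, 'b) monoid_scheme \<Rightarrow> 'a topology \<Rightarrow> bool" where
  "HTAP G T \<longleftrightarrow> \<not> (\<exists>g. inj g \<and> range g \<subseteq> carrier G \<and> hyper_multipliable G T g)"

definition STAP :: "('a, 'b) monoid_scheme \<Rightarrow> 'a topology \<Rightarrow> bool" where
  "STAP G T \<longleftrightarrow> \<not> (\<exists>g. inj g \<and> range g \<subseteq> carrier G \<and> hyper_converging G T g)"

definition precompact_group :: "('a, 'b) monoid_scheme \<Rightarrow> 'a topology \<Rightarrow> bool" where
  "precompact_group G T \<longleftrightarrow> (\<forall>U. openin T U \<and> \<one>\<^bsub>G\<^esub> \<in> U \<longrightarrow>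
     (\<exists>F. finite F \<and> F \<subseteq> carrier G \<and> carrier G \<subseteq> (\<Union>x\<in>F. x <#\<^bsub>G\<^esub> U)))"

end

theory Submission
  imports Defs
begin

(*
  If the open neighbourhood U of the identity contains no nontrivial subgroup and
  g is hyper-converging, then choosing for each n an exponent m n with g n ^ m n outside U
  (whenever one exists) shows that eventually all powers of g n lie in U; the cyclic subgroup
  generated by g n is then trivial, so g is eventually constant and cannot be injective.

  Every neighbourhood of the identity contains a "tail subgroup"
  of elements vanishing on the first n coordinates, which is nontrivial (so H is not NSS) and
  has finite index (so H is precompact); limits in H are eventually constant coordinatewise.
  For HTAP we use a purely combinatorial lemma: a sequence of finite sets, infinitely many
  nonempty, in which every point lies in only finitely many members has a pairwise disjoint
  subsequence of nonempty sets.  Applied to the supports of an injective hyper-multipliable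
  sequence (whose coordinates are eventually trivial), multiplying along such a subsequence
  produces a limit with infinite support, which is impossible in H.
*)

section \<open>Part (a): NSS groups are STAP\<close>

lemma powers_in_small_nbhd_imp_one:
  assumes grp: "group G" and g: "g \<in> carrier G"
    and small: "\<And>K. subgroup K G \<Longrightarrow> K \<subseteq> U \<Longrightarrow> K = {\<one>\<^bsub>G\<^esub>}"
    and powers: "\<And>k::int. g [^]\<^bsub>G\<^esub> k \<in> U"
  shows "g = \<one>\<^bsub>G\<^esub>"
proof -
  have "generate G {g} = {g [^]\<^bsub>G\<^esub> (k::int) | k. k \<in> UNIV}"
    using group.generate_pow[OF grp g] .
  hence "generate G {g} \<subseteq> U" using powers by auto
  moreover have "subgroup (generate G {g}) G"
    using group.generate_is_subgroup[OF grp] g by auto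
  ultimately have "generate G {g} = {\<one>\<^bsub>G\<^esub>}" using small by blast
  moreover have "g \<in> generate G {g}" by (simp add: generate.incl)
  ultimately show ?thesis by auto
qed

(* Along a hyper-converging sequence, eventually every power of the term lies in a given
   neighbourhood of the identity: take as exponent a "bad" power whenever one exists. *)
lemma hyper_converging_eventually_all_powers:
  assumes "hyper_converging G T g" and "openin T U" and "\<one>\<^bsub>G\<^esub> \<in> U"
  shows "eventually (\<lambda>n. \<forall>k::int. g n [^]\<^bsub>G\<^esub> k \<in> U) sequentially"
proof -
  define m where "m n = (SOME k::int. g n [^]\<^bsub>G\<^esub> k \<notin> U)" for n
  have "limitin T (\<lambda>n. g n [^]\<^bsub>G\<^esub> m n) \<one>\<^bsub>G\<^esub> sequentially"
    using assms(1) unfolding hyper_converging_def by blast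
  hence "eventually (\<lambda>n. g n [^]\<^bsub>G\<^esub> m n \<in> U) sequentially"
    using assms(2,3) by (auto simp: limitin_def)
  thus ?thesis
  proof (rule eventually_mono)
    fix n assume "g n [^]\<^bsub>G\<^esub> m n \<in> U"
    thus "\<forall>k::int. g n [^]\<^bsub>G\<^esub> k \<in> U"
      using someI_ex[of "\<lambda>k::int. g n [^]\<^bsub>G\<^esub> k \<notin> U"] unfolding m_def by blast
  qed
qed

(* Part (a). *)
theorem NSS_imp_STAP:
  assumes "group G" and "NSS G T"
  shows "STAP G T"
  unfolding STAP_def
proof
  assume "\<exists>g. inj g \<and> range g \<subseteq> carrier G \<and> hyper_converging G T g"
  then obtain g where g: "inj g" "range g \<subseteq> carrier G" "hyper_converging G T g" by blast
  obtain U where U: "openin T U" "\<one>\<^bsub>G\<^esub> \<in> U"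
    and small: "\<And>K. subgroup K G \<Longrightarrow> K \<subseteq> U \<Longrightarrow> K = {\<one>\<^bsub>G\<^esub>}"
    using assms(2) unfolding NSS_def by blast
  have "eventually (\<lambda>n. g n = \<one>\<^bsub>G\<^esub>) sequentially"
    using hyper_converging_eventually_all_powers[OF g(3) U]
  proof (rule eventually_mono)
    fix n assume "\<forall>k::int. g n [^]\<^bsub>G\<^esub> k \<in> U"
    thus "g n = \<one>\<^bsub>G\<^esub>"
      using powers_in_small_nbhd_imp_one[OF assms(1) _ small] g(2) by blast
  qed
  then obtain N where "\<And>n. n \<ge> N \<Longrightarrow> g n = \<one>\<^bsub>G\<^esub>"
    by (auto simp: eventually_sequentially)
  hence "g N = g (Suc N)" by simp
  thus False using g(1) by (auto dest: injD)
qed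

lemma ordered_prod_sum_group:
  assumes "i \<in> I"
  shows "ordered_prod (sum_group I G) f n i = ordered_prod (G i) (\<lambda>k. f k i) n"
  using assms by (induction n) simp_all

lemma ordered_prod_single_factor:
  assumes "monoid G" and "f s \<in> carrier G" and "\<And>k. k \<noteq> s \<Longrightarrow> f k = \<one>\<^bsub>G\<^esub>"
  shows "ordered_prod G f n = (if s < n then f s else \<one>\<^bsub>G\<^esub>)"
proof (induction n)
  case (Suc n)
  show ?case
  proof (cases "n = s")
    case True
    thus ?thesis using Suc assms(2) by (simp add: monoid.l_one[OF assms(1)])
  next
    case False
    have "ordered_prod G f n \<in> carrier G" using Suc assms(2) monoid.one_closed[OF assms(1)] by simp
    thus ?thesis using Suc False assms(3)[OF False] by (simp add: monoid.r_one[OF assms(1)] less_Suc_eq)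
  qed
qed simp

lemma ordered_prod_eventually_const_imp_factors_one:
  assumes grp: "group G" and f: "\<And>k. f k \<in> carrier G"
    and const: "eventually (\<lambda>n. ordered_prod G f n = c) sequentially"
  shows "eventually (\<lambda>n. f n = \<one>\<^bsub>G\<^esub>) sequentially"
proof -
  have closed: "ordered_prod G f n \<in> carrier G" for n
    by (induction n) (simp_all add: f monoid.m_closed[OF group.is_monoid[OF grp]] monoid.one_closed[OF group.is_monoid[OF grp]])
  have "eventually (\<lambda>n. ordered_prod G f (Suc n) = c) sequentially"
    using const by (simp only: eventually_sequentially_Suc[of "\<lambda>n. ordered_prod G f n = c"])
  with const show ?thesis
  proof eventually_elim
    case (elim n)
    hence "ordered_prod G f n \<otimes>\<^bsub>G\<^esub> f n = ordered_prod G f n" by simp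
    thus ?case using group.l_cancel_one[OF grp closed f] by blast
  qed
qed

(* A sequence of finite sets, infinitely many nonempty, in which every point lies in only
   finitely many members, has a pairwise disjoint subsequence of nonempty sets: choose each
   new member beyond the point where all previously used elements have disappeared. *)
lemma infinite_disjoint_subfamily:
  fixes A :: "nat \<Rightarrow> 'i set"
  assumes fin: "\<And>n. finite (A n)" and inf: "infinite {n. A n \<noteq> {}}"
    and vanish: "\<And>i. eventually (\<lambda>n. i \<notin> A n) sequentially"
  shows "\<exists>r :: nat \<Rightarrow> nat. (\<forall>k. A (r k) \<noteq> {}) \<and> disjoint_family (\<lambda>k. A (r k))"
proof -
  have "\<exists>N. \<forall>n\<ge>N. i \<notin> A n" for i
    using vanish[of i] by (simp add: eventually_sequentially)
  then obtain N where N: "\<And>i n. N i \<le> n \<Longrightarrow> i \<notin> A n" by metis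
  define B where "B n = Max (insert n (N ` A n))" for n
  have B: "n \<le> B n" "\<And>i. i \<in> A n \<Longrightarrow> N i \<le> B n" for n
    unfolding B_def using fin by (simp_all add: Max_ge)
  have "\<exists>m. B n < m \<and> A m \<noteq> {}" for n
    using inf unfolding infinite_nat_iff_unbounded by blast
  then obtain succ where succ: "\<And>n. B n < succ n" "\<And>n. A (succ n) \<noteq> {}" by metis
  define r where "r k = (succ ^^ Suc k) 0" for k
  have r_Suc: "r (Suc k) = succ (r k)" for k by (simp add: r_def)
  have nonempty: "A (r k) \<noteq> {}" for k by (simp add: r_def succ(2))
  have step: "B (r k) < r (Suc k)" for k by (simp add: r_Suc succ(1))
  have mono: "strict_mono r"
    unfolding strict_mono_Suc_iff
  proof
    fix k show "r k < r (Suc k)" using B(1)[of "r k"] step[of k] by linarith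
  qed
  have disjoint: "A (r j) \<inter> A (r k) = {}" if "j < k" for j k
  proof -
    have "r (Suc j) \<le> r k" using mono that by (simp add: strict_mono_less_eq)
    hence "N i \<le> r k" if "i \<in> A (r j)" for i using B(2)[OF that] step[of j] by linarith
    thus ?thesis using N by blast
  qed
  have "disjoint_family (\<lambda>k. A (r k))"
    unfolding disjoint_family_on_def
    using disjoint by (metis Int_commute linorder_neqE_nat)
  with nonempty show ?thesis by blast
qed

lemma limitin_discrete_product_coordinate:
  assumes "limitin (product_topology (\<lambda>i. discrete_topology (S i)) I) f l sequentially"
    and "i \<in> I"
  shows "eventually (\<lambda>n. f n i = l i) sequentially"
proof -
  have lim: "limitin (discrete_topology (S i)) (\<lambda>n. f n i) (l i) sequentially"
    using assms unfolding limitin_componentwise by blast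
  hence "openin (discrete_topology (S i)) {l i}" by (simp add: limitin_def)
  with lim show ?thesis unfolding limitin_def by auto
qed

lemma product_nbhd_contains_cylinder:
  fixes X :: "nat \<Rightarrow> 'a topology"
  assumes "openin (product_topology X UNIV) V" and "x \<in> V"
  shows "\<exists>n. \<forall>y \<in> topspace (product_topology X UNIV). (\<forall>i<n. y i = x i) \<longrightarrow> y \<in> V"
proof -
  obtain U where fin: "finite {i. U i \<noteq> topspace (X i)}"
    and xU: "x \<in> Pi\<^sub>E UNIV U" and UV: "Pi\<^sub>E UNIV U \<subseteq> V"
    using assms unfolding openin_product_topology_alt by auto
  obtain n where n: "\<And>i. U i \<noteq> topspace (X i) \<Longrightarrow> i < n"
    using finite_nat_bounded[OF fin] by auto
  have "y \<in> V" if y: "y \<in> topspace (product_topology X UNIV)" "\<forall>i<n. y i = x i" for y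
  proof -
    have "y i \<in> U i" for i
      using y xU n[of i] by (cases "i < n") (auto simp: PiE_UNIV_domain)
    hence "y \<in> Pi\<^sub>E UNIV U" by (simp add: PiE_UNIV_domain)
    thus ?thesis using UV by blast
  qed
  thus ?thesis by blast
qed

section \<open>Part (c): the restricted direct sum of discrete groups\<close>

locale discrete_direct_sum =
  fixes D :: "nat \<Rightarrow> ('c, 'd) monoid_scheme"
  assumes group_factor: "\<And>i. group (D i)"
begin

abbreviation dsum :: "(nat \<Rightarrow> 'c) monoid" where
  "dsum \<equiv> sum_group UNIV D"

abbreviation ptop :: "(nat \<Rightarrow> 'c) topology" where
  "ptop \<equiv> product_topology (\<lambda>i. discrete_topology (carrier (D i))) UNIV"

abbreviation dtop :: "(nat \<Rightarrow> 'c) topology" where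
  "dtop \<equiv> subtopology ptop (carrier dsum)"

lemma group_dsum: "group dsum"
  using group_factor by simp

lemma one_factor_closed: "\<one>\<^bsub>D i\<^esub> \<in> carrier (D i)"
  using group_factor[of i] by (simp add: group.is_monoid monoid.one_closed)

lemma carrier_dsum: "carrier dsum = {x. (\<forall>i. x i \<in> carrier (D i)) \<and> finite {i. x i \<noteq> \<one>\<^bsub>D i\<^esub>}}"
  using carrier_sum_group[of UNIV D] group_factor by (auto simp: PiE_UNIV_domain)

lemma one_dsum: "\<one>\<^bsub>dsum\<^esub> = (\<lambda>i. \<one>\<^bsub>D i\<^esub>)"
  by (simp add: restrict_def)

lemma mult_dsum: "x \<otimes>\<^bsub>dsum\<^esub> y = (\<lambda>i. x i \<otimes>\<^bsub>D i\<^esub> y i)"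
  by (simp add: restrict_def)

lemma inv_dsum: "x \<in> carrier dsum \<Longrightarrow> inv\<^bsub>dsum\<^esub> x = (\<lambda>i. inv\<^bsub>D i\<^esub> (x i))"
  using inv_sum_group[of UNIV D x] group_factor by (simp add: restrict_def)

lemma topspace_dtop: "topspace dtop = carrier dsum"
  by (auto simp: PiE_UNIV_domain carrier_dsum)

lemma mask_in_dsum:
  assumes "x \<in> carrier dsum"
  shows "(\<lambda>i. if P i then x i else \<one>\<^bsub>D i\<^esub>) \<in> carrier dsum"
proof -
  have "finite {i. x i \<noteq> \<one>\<^bsub>D i\<^esub>}" using assms by (simp add: carrier_dsum)
  hence "finite {i. (if P i then x i else \<one>\<^bsub>D i\<^esub>) \<noteq> \<one>\<^bsub>D i\<^esub>}"
    by (rule finite_subset[rotated]) auto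
  thus ?thesis using assms one_factor_closed by (auto simp: carrier_dsum)
qed

lemma dtop_limit_coordinate:
  assumes "limitin dtop f l sequentially"
  shows "eventually (\<lambda>n. f n i = l i) sequentially"
  using assms limitin_discrete_product_coordinate[of "\<lambda>i. carrier (D i)" UNIV f l i]
  by (simp add: limitin_subtopology)

definition tail_subgroup :: "nat \<Rightarrow> (nat \<Rightarrow> 'c) set" where
  "tail_subgroup n = {x \<in> carrier dsum. \<forall>i<n. x i = \<one>\<^bsub>D i\<^esub>}"

lemma dtop_nbhd_contains_tail_subgroup:
  assumes "openin dtop U" and "\<one>\<^bsub>dsum\<^esub> \<in> U"
  shows "\<exists>n. tail_subgroup n \<subseteq> U"
proof -
  obtain V where V: "openin ptop V" "U = V \<inter> carrier dsum"
    using assms(1) by (auto simp: openin_subtopology)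
  obtain n where n: "\<forall>y \<in> topspace ptop. (\<forall>i<n. y i = \<one>\<^bsub>dsum\<^esub> i) \<longrightarrow> y \<in> V"
    using product_nbhd_contains_cylinder[OF V(1)] V(2) assms(2) by blast
  have "tail_subgroup n \<subseteq> U"
    using n V(2) by (auto simp: tail_subgroup_def carrier_dsum PiE_UNIV_domain)
  thus ?thesis by blast
qed

lemma tail_subgroup_is_subgroup: "subgroup (tail_subgroup n) dsum"
proof (rule group.subgroupI[OF group_dsum])
  show "tail_subgroup n \<subseteq> carrier dsum" by (auto simp: tail_subgroup_def)
  show "tail_subgroup n \<noteq> {}"
    using monoid.one_closed[OF group.is_monoid[OF group_dsum]]
    by (auto simp: tail_subgroup_def one_dsum)
next
  fix x y assume x: "x \<in> tail_subgroup n" and y: "y \<in> tail_subgroup n"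
  show "inv\<^bsub>dsum\<^esub> x \<in> tail_subgroup n"
    using x group.inv_closed[OF group_dsum, of x]
    by (auto simp: tail_subgroup_def inv_dsum monoid.inv_one[OF group.is_monoid[OF group_factor]])
  show "x \<otimes>\<^bsub>dsum\<^esub> y \<in> tail_subgroup n"
    using x y monoid.m_closed[OF group.is_monoid[OF group_dsum], of x y]
    by (auto simp: tail_subgroup_def mult_dsum
        monoid.l_one[OF group.is_monoid[OF group_factor]] one_factor_closed)
qed

lemma tail_subgroup_nontrivial:
  assumes "carrier (D n) \<noteq> {\<one>\<^bsub>D n\<^esub>}"
  shows "tail_subgroup n \<noteq> {\<one>\<^bsub>dsum\<^esub>}"
proof -
  obtain a where a: "a \<in> carrier (D n)" "a \<noteq> \<one>\<^bsub>D n\<^esub>"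
    using assms one_factor_closed by blast
  define x where "x = (\<lambda>i. if i = n then a else \<one>\<^bsub>D i\<^esub>)"
  have "finite {i. x i \<noteq> \<one>\<^bsub>D i\<^esub>}"
    by (rule finite_subset[of _ "{n}"]) (auto simp: x_def)
  hence "x \<in> tail_subgroup n"
    using a one_factor_closed by (auto simp: tail_subgroup_def carrier_dsum x_def)
  moreover have "x \<noteq> \<one>\<^bsub>dsum\<^esub>" using a by (auto simp: one_dsum x_def fun_eq_iff)
  ultimately show ?thesis by blast
qed

definition head_part :: "nat \<Rightarrow> (nat \<Rightarrow> 'c) set" where
  "head_part n = {x \<in> carrier dsum. \<forall>i\<ge>n. x i = \<one>\<^bsub>D i\<^esub>}"

lemma head_part_finite:
  assumes "\<And>i. finite (carrier (D i))"
  shows "finite (head_part n)"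
proof (rule inj_on_finite)
  show "inj_on (\<lambda>x. restrict x {..<n}) (head_part n)"
  proof (rule inj_onI, rule ext)
    fix x y i
    assume x: "x \<in> head_part n" and y: "y \<in> head_part n"
      and eq: "restrict x {..<n} = restrict y {..<n}"
    show "x i = y i"
    proof (cases "i < n")
      case True thus ?thesis using fun_cong[OF eq, of i] by simp
    qed (use x y in \<open>auto simp: head_part_def\<close>)
  qed
  show "(\<lambda>x. restrict x {..<n}) ` head_part n \<subseteq> Pi\<^sub>E {..<n} (\<lambda>i. carrier (D i))"
  proof (rule image_subsetI)
    fix x assume "x \<in> head_part n"
    thus "restrict x {..<n} \<in> Pi\<^sub>E {..<n} (\<lambda>i. carrier (D i))"
      by (auto simp: head_part_def carrier_dsum)
  qed
  show "finite (Pi\<^sub>E {..<n} (\<lambda>i. carrier (D i)))"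
    using assms by (intro finite_PiE) auto
qed

lemma carrier_dsum_Union_head_parts: "carrier dsum = (\<Union>n. head_part n)"
proof
  show "carrier dsum \<subseteq> (\<Union>n. head_part n)"
  proof
    fix y assume y: "y \<in> carrier dsum"
    hence "finite {i. y i \<noteq> \<one>\<^bsub>D i\<^esub>}" by (simp add: carrier_dsum)
    then obtain n where "{i. y i \<noteq> \<one>\<^bsub>D i\<^esub>} \<subseteq> {..<n}"
      using finite_nat_bounded by blast
    hence "y \<in> head_part n" using y by (force simp: head_part_def)
    thus "y \<in> (\<Union>n. head_part n)" by blast
  qed
qed (auto simp: head_part_def)

lemma countable_dsum:
  assumes "\<And>i. finite (carrier (D i))"
  shows "countable (carrier dsum)"
  unfolding carrier_dsum_Union_head_parts
  using head_part_finite[OF assms] by (auto intro: countable_finite)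

lemma metrizable_dtop: "metrizable_space dtop"
proof (rule metrizable_space_subtopology, rule metrizable_topology_D)
  have "(\<lambda>i. \<one>\<^bsub>D i\<^esub>) \<in> topspace ptop" using one_factor_closed by (simp add: PiE_UNIV_domain)
  thus "topspace ptop \<noteq> {}" by blast
qed auto

lemma comm_group_dsum:
  assumes "\<And>i. comm_group (D i)"
  shows "comm_group dsum"
  by (rule group.group_comm_groupI[OF group_dsum])
     (use comm_group.axioms(1)[OF assms] in \<open>auto simp: mult_dsum carrier_dsum fun_eq_iff comm_monoid.m_comm\<close>)

lemma not_NSS_dsum:
  assumes "\<And>i. carrier (D i) \<noteq> {\<one>\<^bsub>D i\<^esub>}"
  shows "\<not> NSS dsum dtop"
  unfolding NSS_def
proof clarify
  fix U assume U: "openin dtop U" "\<one>\<^bsub>dsum\<^esub> \<in> U"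
    and small: "\<forall>K. subgroup K dsum \<and> K \<subseteq> U \<longrightarrow> K = {\<one>\<^bsub>dsum\<^esub>}"
  obtain n where "tail_subgroup n \<subseteq> U"
    using dtop_nbhd_contains_tail_subgroup[OF U] by blast
  hence "tail_subgroup n = {\<one>\<^bsub>dsum\<^esub>}" using small tail_subgroup_is_subgroup by blast
  thus False using tail_subgroup_nontrivial assms by blast
qed

(* Finitely many translates of a neighbourhood of the identity cover the group: every
   element is a head part times an element of a tail subgroup. *)
lemma precompact_dsum:
  assumes "\<And>i. finite (carrier (D i))"
  shows "precompact_group dsum dtop"
  unfolding precompact_group_def
proof clarify
  fix U assume U: "openin dtop U" "\<one>\<^bsub>dsum\<^esub> \<in> U"
  obtain n where n: "tail_subgroup n \<subseteq> U"
    using dtop_nbhd_contains_tail_subgroup[OF U] by blast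
  have "carrier dsum \<subseteq> (\<Union>x\<in>head_part n. x <#\<^bsub>dsum\<^esub> U)"
  proof
    fix y assume y: "y \<in> carrier dsum"
    define h where "h = (\<lambda>i. if i < n then y i else \<one>\<^bsub>D i\<^esub>)"
    define t where "t = (\<lambda>i. if \<not> i < n then y i else \<one>\<^bsub>D i\<^esub>)"
    have "h \<in> head_part n" using mask_in_dsum[OF y] by (auto simp: head_part_def h_def)
    moreover have "t \<in> U" using mask_in_dsum[OF y] n by (auto simp: tail_subgroup_def t_def)
    moreover have "y = h \<otimes>\<^bsub>dsum\<^esub> t"
      using y by (auto simp: mult_dsum fun_eq_iff h_def t_def carrier_dsum
          group.is_monoid[OF group_factor])
    ultimately show "y \<in> (\<Union>x\<in>head_part n. x <#\<^bsub>dsum\<^esub> U)" by (auto simp: l_coset_def)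
  qed
  moreover have "head_part n \<subseteq> carrier dsum" by (auto simp: head_part_def)
  ultimately show "\<exists>F. finite F \<and> F \<subseteq> carrier dsum \<and> carrier dsum \<subseteq> (\<Union>x\<in>F. x <#\<^bsub>dsum\<^esub> U)"
    using head_part_finite[OF assms] by blast
qed

lemma continuous_map_coordinate:
  "continuous_map dtop (discrete_topology (carrier (D k))) (\<lambda>x. x k)"
  by (rule continuous_map_from_subtopology[OF continuous_map_product_projection]) simp

(* Multiplication and inversion act coordinatewise, and every map between discrete spaces
   is continuous. *)
lemma topological_group_dsum: "topological_group dsum dtop"
  unfolding topological_group_def
proof (intro conjI group_dsum topspace_dtop)
  have "continuous_map (prod_topology dtop dtop) dtop (\<lambda>(x, y). x \<otimes>\<^bsub>dsum\<^esub> y)"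
    unfolding continuous_map_in_subtopology continuous_map_componentwise_UNIV
  proof (intro conjI allI)
    fix k
    let ?Dk = "discrete_topology (carrier (D k))"
    have pair: "continuous_map (prod_topology dtop dtop) (prod_topology ?Dk ?Dk) (\<lambda>p. (fst p k, snd p k))"
      by (intro continuous_map_pairedI
          continuous_map_compose[OF continuous_map_fst continuous_map_coordinate, unfolded o_def]
          continuous_map_compose[OF continuous_map_snd continuous_map_coordinate, unfolded o_def])
    have mult: "continuous_map (prod_topology ?Dk ?Dk) ?Dk (\<lambda>(a, b). a \<otimes>\<^bsub>D k\<^esub> b)"
      unfolding prod_topology_discrete_topology[symmetric]
      using group_factor[of k] by (auto simp: group.is_monoid monoid.m_closed)
    show "continuous_map (prod_topology dtop dtop) ?Dk (\<lambda>p. (case p of (x, y) \<Rightarrow> x \<otimes>\<^bsub>dsum\<^esub> y) k)"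
      using continuous_map_compose[OF pair mult] by (simp add: o_def case_prod_beta mult_dsum)
  next
    show "(\<lambda>(x, y). x \<otimes>\<^bsub>dsum\<^esub> y) \<in> topspace (prod_topology dtop dtop) \<rightarrow> carrier dsum"
      using monoid.m_closed[OF group.is_monoid[OF group_dsum]] by (auto simp: topspace_dtop)
  qed
  thus "continuous_map (prod_topology dtop dtop) dtop (\<lambda>(x, y). x \<otimes>\<^bsub>dsum\<^esub> y)" .
  have "continuous_map dtop dtop (\<lambda>x. (\<lambda>i. inv\<^bsub>D i\<^esub> (x i)))"
    unfolding continuous_map_in_subtopology continuous_map_componentwise_UNIV
  proof (intro conjI allI)
    fix k
    have inv: "continuous_map (discrete_topology (carrier (D k))) (discrete_topology (carrier (D k)))
        (\<lambda>a. inv\<^bsub>D k\<^esub> a)"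
      using group_factor[of k] by (auto simp: group.inv_closed)
    show "continuous_map dtop (discrete_topology (carrier (D k))) (\<lambda>x. inv\<^bsub>D k\<^esub> (x k))"
      using continuous_map_compose[OF continuous_map_coordinate inv] by (simp add: o_def)
  next
    show "(\<lambda>x. (\<lambda>i. inv\<^bsub>D i\<^esub> (x i))) \<in> topspace dtop \<rightarrow> carrier dsum"
      using group.inv_closed[OF group_dsum] inv_dsum by (auto simp: topspace_dtop)
  qed
  thus "continuous_map dtop dtop (\<lambda>x. inv\<^bsub>dsum\<^esub> x)"
    by (rule continuous_map_eq) (simp add: topspace_dtop inv_dsum)
qed

subsection \<open>The restricted direct sum is HTAP\<close>

(* Hyper-multipliability with all exponents 1 already forces every coordinate of the
   sequence to become trivial. *)
lemma hyper_multipliable_coordinates_eventually_one: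
  assumes hm: "hyper_multipliable dsum dtop g" and g: "range g \<subseteq> carrier dsum"
  shows "eventually (\<lambda>n. g n i = \<one>\<^bsub>D i\<^esub>) sequentially"
proof -
  obtain l where "limitin dtop (ordered_prod dsum (\<lambda>k. g k [^]\<^bsub>dsum\<^esub> (1::int))) l sequentially"
    using hm[unfolded hyper_multipliable_def, rule_format, of "\<lambda>k. 1"] by blast
  moreover have "(\<lambda>k. g k [^]\<^bsub>dsum\<^esub> (1::int)) = g"
    using group.int_pow_1[OF group_dsum] g by (simp add: fun_eq_iff range_subsetD)
  ultimately have "eventually (\<lambda>n. ordered_prod dsum g n i = l i) sequentially"
    using dtop_limit_coordinate by simp
  hence const: "eventually (\<lambda>n. ordered_prod (D i) (\<lambda>k. g k i) n = l i) sequentially"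
    by (simp add: ordered_prod_sum_group)
  show ?thesis
  proof (rule ordered_prod_eventually_const_imp_factors_one[OF group_factor _ const])
    fix k show "g k i \<in> carrier (D i)" using g by (auto simp: carrier_dsum)
  qed
qed

(* Multiplying the terms of a subsequence with pairwise disjoint supports: each coordinate
   of the partial products is eventually the unique nontrivial entry of that coordinate. *)
lemma limit_of_disjointly_supported_product:
  assumes g: "range g \<subseteq> carrier dsum"
    and disj: "\<And>j k i. j \<noteq> k \<Longrightarrow> g (r j) i = \<one>\<^bsub>D i\<^esub> \<or> g (r k) i = \<one>\<^bsub>D i\<^esub>"
    and lim: "limitin dtop (ordered_prod dsum (\<lambda>n. if n \<in> range r then g n else \<one>\<^bsub>dsum\<^esub>)) l sequentially"
    and nz: "g (r k) i \<noteq> \<one>\<^bsub>D i\<^esub>"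
  shows "l i = g (r k) i"
proof -
  define f where "f n = (if n \<in> range r then g n else \<one>\<^bsub>dsum\<^esub>) i" for n
  have others: "f n = \<one>\<^bsub>D i\<^esub>" if "n \<noteq> r k" for n
  proof (cases "n \<in> range r")
    case True
    then obtain j where j: "n = r j" by blast
    with that have "j \<noteq> k" by blast
    with disj[of j k i] nz j show ?thesis by (simp add: f_def)
  qed (simp add: f_def one_dsum)
  have fk: "f (r k) = g (r k) i" "g (r k) i \<in> carrier (D i)"
    using g by (auto simp: f_def carrier_dsum)
  have prod: "ordered_prod (D i) f N = (if r k < N then g (r k) i else \<one>\<^bsub>D i\<^esub>)" for N
    using ordered_prod_single_factor[OF group.is_monoid[OF group_factor[of i]], of f "r k" N] fk others
    by simp
  have "eventually (\<lambda>N. ordered_prod (D i) f N = l i \<and> r k < N) sequentially"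
    using dtop_limit_coordinate[OF lim, of i] eventually_gt_at_top[of "r k"]
    by eventually_elim (simp add: ordered_prod_sum_group f_def[abs_def])
  hence "eventually (\<lambda>N. l i = g (r k) i) sequentially"
    by (rule eventually_mono) (auto simp: prod)
  thus ?thesis by simp
qed

theorem HTAP_dsum: "HTAP dsum dtop"
  unfolding HTAP_def
proof
  assume "\<exists>g. inj g \<and> range g \<subseteq> carrier dsum \<and> hyper_multipliable dsum dtop g"
  then obtain g where inj: "inj g" and g: "range g \<subseteq> carrier dsum"
    and hm: "hyper_multipliable dsum dtop g" by blast
  define supp where "supp n = {i. g n i \<noteq> \<one>\<^bsub>D i\<^esub>}" for n
  have fin: "finite (supp n)" for n using g by (auto simp: supp_def carrier_dsum)
  have vanish: "eventually (\<lambda>n. i \<notin> supp n) sequentially" for i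
    using hyper_multipliable_coordinates_eventually_one[OF hm g] by (simp add: supp_def)
  have "{n. supp n = {}} \<subseteq> g -` {\<one>\<^bsub>dsum\<^esub>}" by (auto simp: supp_def restrict_def)
  hence "finite {n. supp n = {}}" using finite_vimageI[OF _ inj] finite_subset by blast
  hence "infinite {n. supp n \<noteq> {}}"
    using Diff_infinite_finite[OF _ infinite_UNIV_nat] by (simp add: Compl_eq_Diff_UNIV[symmetric])
  then obtain r :: "nat \<Rightarrow> nat" where nonempty: "\<forall>k. supp (r k) \<noteq> {}"
    and disj: "disjoint_family (\<lambda>k. supp (r k))"
    using infinite_disjoint_subfamily[OF fin _ vanish] by blast
  have disj': "g (r j) i = \<one>\<^bsub>D i\<^esub> \<or> g (r k) i = \<one>\<^bsub>D i\<^esub>" if "j \<noteq> k" for j k i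
    using disj that by (auto simp: disjoint_family_on_def supp_def)
  define m where "m n = (if n \<in> range r then 1 else 0 :: int)" for n
  obtain l where "limitin dtop (ordered_prod dsum (\<lambda>n. g n [^]\<^bsub>dsum\<^esub> m n)) l sequentially"
    using hm[unfolded hyper_multipliable_def, rule_format, of m] by blast
  moreover have "(\<lambda>n. g n [^]\<^bsub>dsum\<^esub> m n) = (\<lambda>n. if n \<in> range r then g n else \<one>\<^bsub>dsum\<^esub>)"
    using group.int_pow_1[OF group_dsum] g by (simp add: m_def fun_eq_iff range_subsetD)
  ultimately have lim: "limitin dtop (ordered_prod dsum (\<lambda>n. if n \<in> range r then g n else \<one>\<^bsub>dsum\<^esub>)) l sequentially"
    by simp
  have "(\<Union>k. supp (r k)) \<subseteq> {i. l i \<noteq> \<one>\<^bsub>D i\<^esub>}"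
    using limit_of_disjointly_supported_product[OF g disj' lim] by (auto simp: supp_def)
  moreover have "finite {i. l i \<noteq> \<one>\<^bsub>D i\<^esub>}"
    using lim by (auto simp: limitin_def topspace_dtop carrier_dsum)
  moreover have "infinite (\<Union>k. supp (r k))"
    using infinite_disjoint_family_imp_infinite_UNION[OF infinite_UNIV_nat _ disj] nonempty
    by blast
  ultimately show False using finite_subset by blast
qed

end

theorem theorem5p1:
  shows "(\<forall>(G :: ('a, 'b) monoid_scheme) T.
            topological_group G T \<and> Hausdorff_space T \<and> NSS G T \<longrightarrow> STAP G T)
       \<and> (\<forall>D :: nat \<Rightarrow> ('c, 'd) monoid_scheme.
            (\<forall>i. comm_group (D i) \<and> finite (carrier (D i)) \<and> carrier (D i) \<noteq> {\<one>\<^bsub>D i\<^esub>}) \<longrightarrow>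
            (let H = sum_group UNIV D;
                 TH = subtopology (product_topology (\<lambda>i. discrete_topology (carrier (D i))) UNIV)
                                  (carrier H)
             in countable (carrier H) \<and> metrizable_space TH \<and> topological_group H TH \<and>
                precompact_group H TH \<and> comm_group H \<and> HTAP H TH \<and> \<not> NSS H TH))"
proof (intro conjI allI impI)
  fix G :: "('a, 'b) monoid_scheme" and T
  assume "topological_group G T \<and> Hausdorff_space T \<and> NSS G T"
  thus "STAP G T" using NSS_imp_STAP by (auto simp: topological_group_def)
next
  fix D :: "nat \<Rightarrow> ('c, 'd) monoid_scheme"
  assume factors: "\<forall>i. comm_group (D i) \<and> finite (carrier (D i)) \<and> carrier (D i) \<noteq> {\<one>\<^bsub>D i\<^esub>}"
  hence comm: "\<And>i. comm_group (D i)" and fin: "\<And>i. finite (carrier (D i))"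
    and nontrivial: "\<And>i. carrier (D i) \<noteq> {\<one>\<^bsub>D i\<^esub>}" by auto
  interpret discrete_direct_sum D
    by (rule discrete_direct_sum.intro) (rule comm_group.axioms(2)[OF comm])
  show "let H = sum_group UNIV D;
            TH = subtopology (product_topology (\<lambda>i. discrete_topology (carrier (D i))) UNIV) (carrier H)
        in countable (carrier H) \<and> metrizable_space TH \<and> topological_group H TH \<and>
           precompact_group H TH \<and> comm_group H \<and> HTAP H TH \<and> \<not> NSS H TH"
    using countable_dsum[OF fin] metrizable_dtop topological_group_dsum precompact_dsum[OF fin]
      comm_group_dsum[OF comm] HTAP_dsum not_NSS_dsum[OF nontrivial]
    by (simp add: Let_def)
qed

end
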